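(* Let $m = p + 12k$ with $k \geq 0$ an integer and $p \in \{11,13,17,19\}$. If $G_{2m}$ admits three type-2 basic sets of dipaths and two type-1 basic sets of dipaths such that all the dipaths and directed cycles appearing in these five sets (32 in total) are pairwise arc-disjoint, then $G_{2m}$ admits a $\vec{C}_m$-factorization.
   Context: Let $m$ be odd. $G_{2m} = \vec{X}(m,\{1,3\}) \wr K^*_2$ is the digraph with vertex set $\{x_a, y_a : a \in \mathbb{Z}_m\}$ whose arcs are: $(u_a, v_b)$ for all $u,v \in \{x,y\}$ and $a,b$ with $b-a \equiv 1$ or $3 \pmod m$, together with $(x_a,y_a)$ and $(y_a,x_a)$ for all $a$. An arc from a vertex with subscript $a$ to one with subscript $b$ has difference equal to the representative of $b-a$ in $\{0,\dots,m-1\}$; a type-$k$ cycle is a directed $m$-cycle whose arc differences sum (as integers) to $km$. $\rho$ sends $x_i\mapsto x_{i+1}$, $y_i\mapsto y_{i+1}$ (mod $m$). For a dipath $P$: $s(P)$, $t(P)$, $\mathrm{len}(P)$ are its first vertex, last vertex and number of arcs; a dipath of length $0$ is a single vertex. $V_0=\{x_j,y_j: 0\le j\le p-1\}$ and $V_i=\{x_j,y_j: p+12(i-1)\le j\le p+12i-1\}$ for $1\le i\le k$. Type-2 basic set: an 8-tuple $(W,X,Y,Z,Q,R,S,T)$ of dipaths with (C1) $Q,R,S,T$ pairwise vertex-disjoint; if $k\ge1$ then $W,X,Y,Z$ pairwise vertex-disjoint, and if $k=0$ then $WX$, $YZ$ are vertex-disjoint type-2 directed cycles; (C2) $s(X)=\rho^{-p}(t(W))$,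 $s(W)=\rho^{-p}(t(X))$, $s(Z)=\rho^{-p}(t(Y))$, $s(Y)=\rho^{-p}(t(Z))$; (C3) $\mathrm{len}(W)+\mathrm{len}(X)=\mathrm{len}(Y)+\mathrm{len}(Z)=p$, and $\mathrm{len}(Q)+\mathrm{len}(R)=\mathrm{len}(S)+\mathrm{len}(T)=12$ if $k\ge1$, all four of length $0$ if $k=0$; (C4) each of $W,X,Y,Z$ has source and internal vertices in $V_0$ and terminal vertex $x_t$ or $y_t$ with $t\in\{p,p+1,p+2\}$; (C5) $t(W)=s(Q)$, $t(X)=s(R)$, $t(Y)=s(S)$, $t(Z)=s(T)$; (C6) if $k\ge1$ and $P\in\{Q,R,S,T\}$ has $s(P)=x_t$ (resp. $y_t$) then $t(P)=x_{t+12}$ (resp. $y_{t+12}$) and all internal vertices of $P$ lie in $V_1$. Type-1 basic set: a 4-tuple $(X,Y,R,S)$ with (C1) $R,S$ vertex-disjoint; if $k\ge1$ then $X,Y$ are vertex-disjoint dipaths, and if $k=0$ they are vertex-disjoint type-1 directed cycles; (C2) $s(X)=\rho^{-p}(t(X))$, $s(Y)=\rho^{-p}(t(Y))$; (C3) $\mathrm{len}(X)=\mathrm{len}(Y)=p$, and $\mathrm{len}(R)=\mathrm{len}(S)=12$ if $k\ge1$, $0$ if $k=0$; (C4) each of $X,Y$ has source and internal vertices in $V_0$ and terminal vertex $x_t$ or $y_t$ with $t\in\{p,p+1,p+2\}$; (C5) $t(X)=s(R)$, $t(Y)=s(S)$; (C6) if $k\ge1$ and $P\in\{R,S\}$ has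 $s(P)=x_t$ (resp. $y_t$) then $t(P)=x_{t+12}$ (resp. $y_{t+12}$) and all internal vertices of $P$ lie in $V_1$. A $\vec{C}_m$-factor is a spanning subdigraph that is a disjoint union of directed $m$-cycles; a $\vec{C}_m$-factorization is a partition of the arc set into $\vec{C}_m$-factors. *)

theory Defs
  imports Main
begin

text \<open>Vertices of G_{2m}: (False, a) is x_a and (True, a) is y_a, with subscript a < m
  representing an element of Z_m.\<close>

type_synonym vtx = "bool \<times> nat"

definition verts :: "nat \<Rightarrow> vtx set" where
  "verts m = UNIV \<times> {..<m}"

text \<open>Arc set of G_{2m} = X(m,{1,3}) wr K_2^*.\<close>
definition G_arcs :: "nat \<Rightarrow> (vtx \<times> vtx) set" where
  "G_arcs m = {((u,a),(v,b)). a < m \<and> b < m \<and>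
      (b = (a + 1) mod m \<or> b = (a + 3) mod m \<or> (u \<noteq> v \<and> a = b))}"

definition shift :: "nat \<Rightarrow> int \<Rightarrow> vtx \<Rightarrow> vtx" where
  "shift m d v = (fst v, nat ((int (snd v) + d) mod int m))"

definition rho :: "nat \<Rightarrow> vtx \<Rightarrow> vtx" where
  "rho m = shift m 1"

definition arc_diff :: "nat \<Rightarrow> vtx \<Rightarrow> vtx \<Rightarrow> nat" where
  "arc_diff m u v = (snd v + m - snd u) mod m"

definition walk :: "nat \<Rightarrow> vtx list \<Rightarrow> bool" where
  "walk m P \<longleftrightarrow> P \<noteq> [] \<and> set P \<subseteq> verts m \<and>
     (\<forall>i. Suc i < length P \<longrightarrow> (P ! i, P ! Suc i) \<in> G_arcs m)"

definition dipath :: "nat \<Rightarrow> vtx list \<Rightarrow> bool" where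
  "dipath m P \<longleftrightarrow> walk m P \<and> distinct P"

definition src :: "vtx list \<Rightarrow> vtx" where "src P = hd P"
definition tgt :: "vtx list \<Rightarrow> vtx" where "tgt P = last P"
definition len :: "vtx list \<Rightarrow> nat" where "len P = length P - 1"
definition internal :: "vtx list \<Rightarrow> vtx set" where "internal P = set (butlast (tl P))"
definition walk_arcs :: "vtx list \<Rightarrow> (vtx \<times> vtx) set" where
  "walk_arcs P = set (zip P (tl P))"

definition dicycle :: "nat \<Rightarrow> vtx list \<Rightarrow> bool" where
  "dicycle m C \<longleftrightarrow> length C = m \<and> distinct C \<and> set C \<subseteq> verts m \<and>
     (\<forall>i<m. (C ! i, C ! (Suc i mod m)) \<in> G_arcs m)"

definition cyc_arcs :: "vtx list \<Rightarrow> (vtx \<times> vtx) set" where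
  "cyc_arcs C = {(C ! i, C ! (Suc i mod length C)) | i. i < length C}"

definition cycle_of_type :: "nat \<Rightarrow> nat \<Rightarrow> vtx list \<Rightarrow> bool" where
  "cycle_of_type m j C \<longleftrightarrow> dicycle m C \<and>
     (\<Sum>i<length C. arc_diff m (C ! i) (C ! (Suc i mod length C))) = j * m"

definition closed_walk_type :: "nat \<Rightarrow> nat \<Rightarrow> vtx list \<Rightarrow> bool" where
  "closed_walk_type m j P \<longleftrightarrow> walk m P \<and> hd P = last P \<and> cycle_of_type m j (butlast P)"

definition V0 :: "nat \<Rightarrow> vtx set" where "V0 p = {v. snd v < p}"
definition V1 :: "nat \<Rightarrow> vtx set" where "V1 p = {v. p \<le> snd v \<and> snd v \<le> p + 11}"

definition C4 :: "nat \<Rightarrow> nat \<Rightarrow> vtx list \<Rightarrow> bool" where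
  "C4 m p P \<longleftrightarrow> set (butlast P) \<subseteq> V0 p \<and> (\<exists>i\<le>2. snd (tgt P) = (p + i) mod m)"

definition C6 :: "nat \<Rightarrow> nat \<Rightarrow> vtx list \<Rightarrow> bool" where
  "C6 m p P \<longleftrightarrow> tgt P = shift m 12 (src P) \<and> internal P \<subseteq> V1 p"

definition type2_basic :: "nat \<Rightarrow> nat \<Rightarrow> nat \<Rightarrow> vtx list list \<Rightarrow> bool" where
  "type2_basic m p k B \<longleftrightarrow> length B = 8 \<and> (\<forall>P\<in>set B. dipath m P) \<and>
    (let W = B!0; X = B!1; Y = B!2; Z = B!3; Q = B!4; R = B!5; S = B!6; T = B!7 in
     \<comment> \<open>C1\<close>
     (\<forall>i\<in>{4..7}. \<forall>j\<in>{4..7}. i \<noteq> j \<longrightarrow> set (B!i) \<inter> set (B!j) = {}) \<and>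
     (k \<ge> 1 \<longrightarrow> (\<forall>i<4. \<forall>j<4. i \<noteq> j \<longrightarrow> set (B!i) \<inter> set (B!j) = {})) \<and>
     (k = 0 \<longrightarrow> closed_walk_type m 2 (W @ tl X) \<and> closed_walk_type m 2 (Y @ tl Z) \<and>
               (set W \<union> set X) \<inter> (set Y \<union> set Z) = {}) \<and>
     \<comment> \<open>C2\<close>
     src X = shift m (- int p) (tgt W) \<and> src W = shift m (- int p) (tgt X) \<and>
     src Z = shift m (- int p) (tgt Y) \<and> src Y = shift m (- int p) (tgt Z) \<and>
     \<comment> \<open>C3\<close>
     len W + len X = p \<and> len Y + len Z = p \<and>
     (k \<ge> 1 \<longrightarrow> len Q + len R = 12 \<and> len S + len T = 12) \<and>
     (k = 0 \<longrightarrow> len Q = 0 \<and> len R = 0 \<and> len S = 0 \<and> len T = 0) \<and>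
     \<comment> \<open>C4\<close>
     C4 m p W \<and> C4 m p X \<and> C4 m p Y \<and> C4 m p Z \<and>
     \<comment> \<open>C5\<close>
     tgt W = src Q \<and> tgt X = src R \<and> tgt Y = src S \<and> tgt Z = src T \<and>
     \<comment> \<open>C6\<close>
     (k \<ge> 1 \<longrightarrow> C6 m p Q \<and> C6 m p R \<and> C6 m p S \<and> C6 m p T))"

definition type1_basic :: "nat \<Rightarrow> nat \<Rightarrow> nat \<Rightarrow> vtx list list \<Rightarrow> bool" where
  "type1_basic m p k B \<longleftrightarrow> length B = 4 \<and>
    (let X = B!0; Y = B!1; R = B!2; S = B!3 in
     \<comment> \<open>C1\<close>
     dipath m R \<and> dipath m S \<and> set R \<inter> set S = {} \<and>
     (k \<ge> 1 \<longrightarrow> dipath m X \<and> dipath m Y \<and> set X \<inter> set Y = {}) \<and>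
     (k = 0 \<longrightarrow> closed_walk_type m 1 X \<and> closed_walk_type m 1 Y \<and> set X \<inter> set Y = {}) \<and>
     \<comment> \<open>C2\<close>
     src X = shift m (- int p) (tgt X) \<and> src Y = shift m (- int p) (tgt Y) \<and>
     \<comment> \<open>C3\<close>
     len X = p \<and> len Y = p \<and>
     (k \<ge> 1 \<longrightarrow> len R = 12 \<and> len S = 12) \<and>
     (k = 0 \<longrightarrow> len R = 0 \<and> len S = 0) \<and>
     \<comment> \<open>C4\<close>
     C4 m p X \<and> C4 m p Y \<and>
     \<comment> \<open>C5\<close>
     tgt X = src R \<and> tgt Y = src S \<and>
     \<comment> \<open>C6\<close>
     (k \<ge> 1 \<longrightarrow> C6 m p R \<and> C6 m p S))"

definition Cm_factor :: "nat \<Rightarrow> (vtx \<times> vtx) set \<Rightarrow> bool" where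
  "Cm_factor m A \<longleftrightarrow> (\<exists>Cs. (\<forall>C\<in>Cs. dicycle m C) \<and>
      (\<forall>C\<in>Cs. \<forall>C'\<in>Cs. C \<noteq> C' \<longrightarrow> set C \<inter> set C' = {}) \<and>
      (\<Union>C\<in>Cs. set C) = verts m \<and> (\<Union>C\<in>Cs. cyc_arcs C) = A)"

definition Cm_factorization :: "nat \<Rightarrow> bool" where
  "Cm_factorization m \<longleftrightarrow> (\<exists>F. (\<forall>A\<in>F. Cm_factor m A) \<and>
      (\<forall>A\<in>F. \<forall>B\<in>F. A \<noteq> B \<longrightarrow> A \<inter> B = {}) \<and> \<Union>F = G_arcs m)"

end

theory Submission
  imports Defs
begin

text \<open>
  Each basic set yields two vertex-disjoint directed m-cycles. For a type-2 set these are
  W Q (rho^12 Q) ... (rho^(12(k-1)) Q) X R (rho^12 R) ... (rho^(12(k-1)) R) and the same with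
  Y, S, Z, T; for a type-1 set they are X R ... rho^(12(k-1)) R and Y S ... rho^(12(k-1)) S.
  They close up because k copies of a block advance the subscript by 12k, which is -p modulo m,
  exactly the offset prescribed by (C2). The base paths W, X, Y, Z stay in V_0, while the t-th
  copies of the blocks Q, R, S, T stay in V_(t+1); comparing these windows shows that the two
  cycles of a basic set are vertex-disjoint, hence form a C_m-factor, and that copies of
  arc-disjoint paths are arc-disjoint, hence the five factors are pairwise arc-disjoint.
  Each factor has 2m arcs and G_2m has 10m arcs, so the five factors exhaust G_2m.
\<close>

section \<open>Walks and chains of walks\<close>

lemma walk_arcs_conv_nth: "walk_arcs P = {(P!i, P!Suc i) | i. Suc i < length P}"
  unfolding walk_arcs_def set_zip by (auto simp: nth_tl)

lemma walk_iff_arcs: "walk m P \<longleftrightarrow> P \<noteq> [] \<and> set P \<subseteq> verts m \<and> walk_arcs P \<subseteq> G_arcs m"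
  unfolding walk_def walk_arcs_conv_nth by blast

lemma walk_arcs_singleton [simp]: "walk_arcs [a] = {}"
  and walk_arcs_Cons_Cons [simp]: "walk_arcs (a # b # xs) = insert (a, b) (walk_arcs (b # xs))"
  by (auto simp: walk_arcs_def)

lemma walk_arcs_append_overlap: "walk_arcs (xs @ y # ys) = walk_arcs (xs @ [y]) \<union> walk_arcs (y # ys)"
  by (induction xs rule: induct_list012) auto

lemma walk_arcs_map: "walk_arcs (map f P) = (\<lambda>(a, b). (f a, f b)) ` walk_arcs P"
  unfolding walk_arcs_def by (simp add: map_tl[symmetric] zip_map_map)

lemma walk_arcs_memD: "(a, b) \<in> walk_arcs P \<Longrightarrow> a \<in> set (butlast P) \<and> b \<in> set P"
proof -
  assume "(a, b) \<in> walk_arcs P"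
  then obtain i where i: "a = P ! i" "b = P ! Suc i" "Suc i < length P"
    unfolding walk_arcs_conv_nth by auto
  then have "a = butlast P ! i" "i < length (butlast P)" by (auto simp: nth_butlast)
  then show ?thesis using i by (metis nth_mem)
qed

abbreviation linked :: "'a list \<Rightarrow> 'a list \<Rightarrow> bool" where
  "linked P Q \<equiv> last P = hd Q"

definition glue :: "'a list list \<Rightarrow> 'a list" where
  "glue Ps = concat (map butlast Ps) @ [last (last Ps)]"

lemma hd_glue:
  assumes "Ps \<noteq> []" "\<forall>P\<in>set Ps. P \<noteq> []" "successively linked Ps"
  shows "hd (glue Ps) = hd (hd Ps)"
  using assms unfolding glue_def
proof (induction Ps rule: induct_list012)
  case (3 P Q Rs)
  have "hd (concat (map butlast (Q # Rs)) @ [last (last (Q # Rs))]) = last P"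
    using "3.IH"(2) "3.prems" by simp
  moreover have "P = butlast P @ [last P]" using "3.prems"(2) by simp
  then have "hd P = (if butlast P = [] then last P else hd (butlast P))"
    by (metis hd_append list.sel(1))
  ultimately show ?case by (simp add: hd_append)
qed (auto simp: snoc_eq_iff_butlast)

lemma walk_arcs_glue:
  assumes "Ps \<noteq> []" "\<forall>P\<in>set Ps. P \<noteq> []" "successively linked Ps"
  shows "walk_arcs (glue Ps) = (\<Union>P\<in>set Ps. walk_arcs P)"
  using assms
proof (induction Ps rule: induct_list012)
  case (3 P Q Rs)
  define R where "R = glue (Q # Rs)"
  have "hd R = last P" unfolding R_def using hd_glue[of "Q # Rs"] "3.prems" by simp
  moreover have "R \<noteq> []" by (simp add: R_def glue_def)
  ultimately have R: "R = last P # tl R" by (metis list.collapse)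
  have "P \<noteq> []" using "3.prems"(2) by simp
  then have P: "butlast P @ [last P] = P" by simp
  have "glue (P # Q # Rs) = butlast P @ last P # tl R"
    using R by (simp add: R_def glue_def)
  then have "walk_arcs (glue (P # Q # Rs)) = walk_arcs P \<union> walk_arcs R"
    using walk_arcs_append_overlap[of "butlast P" "last P" "tl R"] P R[symmetric] by simp
  also have "walk_arcs R = (\<Union>S\<in>set (Q # Rs). walk_arcs S)"
    unfolding R_def using "3.IH"(2) "3.prems" by simp
  finally show ?case by simp
qed (auto simp: glue_def snoc_eq_iff_butlast)

lemma dicycle_of_closed_walk:
  assumes "walk m (C @ [hd C])" "length C = m" "distinct C" "0 < m"
  shows "dicycle m C" "cyc_arcs C = walk_arcs (C @ [hd C])"
proof -
  have nth: "(C @ [hd C]) ! i = C ! i" "(C @ [hd C]) ! Suc i = C ! (Suc i mod m)" if "i < m" for i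
  proof -
    show "(C @ [hd C]) ! i = C ! i" using that assms(2) by (simp add: nth_append)
    show "(C @ [hd C]) ! Suc i = C ! (Suc i mod m)"
    proof (cases "Suc i = m")
      case True then show ?thesis using assms(2) by (cases C) (auto simp: nth_append)
    next
      case False then show ?thesis using that assms(2) by (simp add: nth_append)
    qed
  qed
  have steps: "((C @ [hd C]) ! i, (C @ [hd C]) ! Suc i) \<in> G_arcs m" if "i < m" for i
    using assms(1,2) that unfolding walk_def by simp
  have arcs: "(C ! i, C ! (Suc i mod m)) \<in> G_arcs m" if "i < m" for i
    using steps[OF that] nth[OF that] by simp
  have "set C \<subseteq> verts m" using assms(1) unfolding walk_def by simp
  then show "dicycle m C" using assms(2,3) arcs unfolding dicycle_def by blast
  have "cyc_arcs C = (\<lambda>i. (C ! i, C ! (Suc i mod m))) ` {..<m}"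
    unfolding cyc_arcs_def assms(2) by auto
  also have "\<dots> = (\<lambda>i. ((C @ [hd C]) ! i, (C @ [hd C]) ! Suc i)) ` {..<m}"
    using nth by (intro image_cong) auto
  also have "\<dots> = walk_arcs (C @ [hd C])"
    unfolding walk_arcs_conv_nth using assms(2) by auto
  finally show "cyc_arcs C = walk_arcs (C @ [hd C])" .
qed

lemma dicycle_of_closed_chain:
  assumes "0 < m" "Ps \<noteq> []" "\<forall>P\<in>set Ps. walk m P" "successively linked (Ps @ [hd Ps])"
    and "(\<Sum>P\<leftarrow>Ps. len P) = m" "distinct (concat (map butlast Ps))"
  shows "dicycle m (concat (map butlast Ps))"
    and "cyc_arcs (concat (map butlast Ps)) = (\<Union>P\<in>set Ps. walk_arcs P)"
proof -
  define C where "C = concat (map butlast Ps)"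
  have ne: "\<forall>P\<in>set Ps. P \<noteq> []" using assms(3) by (auto simp: walk_def)
  have linked: "successively linked Ps" "last (last Ps) = hd (hd Ps)"
    using assms(2,4) by (auto simp: successively_append_iff)
  have "length C = (\<Sum>P\<leftarrow>Ps. len P)"
    unfolding C_def len_def length_concat by (simp add: comp_def)
  then have length: "length C = m" using assms(5) by simp
  then have "C \<noteq> []" using assms(1) by auto
  then have "hd C = hd (glue Ps)" by (simp add: C_def glue_def)
  then have glue: "C @ [hd C] = glue Ps"
    using hd_glue[OF assms(2) ne linked(1)] linked(2) by (simp add: C_def glue_def)
  have arcs: "walk_arcs (C @ [hd C]) = (\<Union>P\<in>set Ps. walk_arcs P)"
    unfolding glue by (rule walk_arcs_glue[OF assms(2) ne linked(1)])
  have "last (last Ps) \<in> set (last Ps)" "last Ps \<in> set Ps" using assms(2) ne by simp_all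
  then have "set (glue Ps) \<subseteq> (\<Union>P\<in>set Ps. set P)"
    by (auto simp: glue_def dest: in_set_butlastD)
  also have "\<dots> \<subseteq> verts m" using assms(3) unfolding walk_def by auto
  finally have "set (C @ [hd C]) \<subseteq> verts m" unfolding glue .
  moreover have "walk_arcs (C @ [hd C]) \<subseteq> G_arcs m"
    unfolding arcs using assms(3) by (auto simp: walk_iff_arcs)
  ultimately have walk: "walk m (C @ [hd C])" unfolding walk_iff_arcs by simp
  have "distinct C" using assms(6) by (simp add: C_def)
  note cycle = dicycle_of_closed_walk[OF walk length this assms(1)]
  show "dicycle m (concat (map butlast Ps))" using cycle(1) by (simp add: C_def)
  show "cyc_arcs (concat (map butlast Ps)) = (\<Union>P\<in>set Ps. walk_arcs P)"
    using cycle(2) arcs by (simp add: C_def)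
qed

section \<open>The rotation\<close>

lemma fst_shift [simp]: "fst (shift m d v) = fst v"
  by (simp add: shift_def)

lemma int_snd_shift: "0 < m \<Longrightarrow> int (snd (shift m d v)) = (int (snd v) + d) mod int m"
  by (simp add: shift_def)

lemma shift_in_verts: "0 < m \<Longrightarrow> shift m d v \<in> verts m"
  by (cases v) (simp add: verts_def shift_def nat_less_iff)

lemma shift_eq_iff:
  assumes "0 < m"
  shows "shift m d u = shift m d' v \<longleftrightarrow>
    fst u = fst v \<and> (int (snd u) + d) mod int m = (int (snd v) + d') mod int m"
proof -
  have "snd (shift m d u) = snd (shift m d' v) \<longleftrightarrow>
      int (snd (shift m d u)) = int (snd (shift m d' v))"
    by (rule of_nat_eq_iff[symmetric])
  then show ?thesis by (simp add: prod_eq_iff int_snd_shift[OF assms])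
qed

lemma shift_shift:
  assumes "0 < m"
  shows "shift m d (shift m d' v) = shift m (d + d') v"
proof -
  have "(int (snd (shift m d' v)) + d) mod int m = (int (snd v) + (d + d')) mod int m"
    unfolding int_snd_shift[OF assms] mod_add_left_eq by (simp add: algebra_simps)
  then show ?thesis by (simp add: shift_eq_iff[OF assms])
qed

lemma shift_eq_self:
  assumes "v \<in> verts m" "d mod int m = 0"
  shows "shift m d v = v"
proof -
  have "(int (snd v) + d) mod int m = int (snd v) mod int m"
    using mod_add_right_eq[of "int (snd v)" d "int m"] assms(2) by simp
  then show ?thesis using assms(1) by (simp add: shift_def verts_def mem_Times_iff)
qed

lemma shift_inj_on: "inj_on (shift m d) (verts m)"
proof (rule inj_onI)
  fix u v assume uv: "u \<in> verts m" "v \<in> verts m" "shift m d u = shift m d v"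
  then have m: "0 < m" by (auto simp: verts_def)
  have "shift m (- d) (shift m d u) = shift m (- d) (shift m d v)" using uv(3) by simp
  then show "u = v" using uv(1,2) by (simp add: shift_shift[OF m] shift_eq_self)
qed

lemma snd_shift_no_wrap: "snd v + n < m \<Longrightarrow> snd (shift m (int n) v) = snd v + n"
  by (simp add: shift_def)

text \<open>Passing through k copies of a block shifts by 12k, which is the offset -p of (C2).\<close>

lemma shift_12k:
  assumes "m = p + 12 * k"
  shows "shift m (int (12 * k)) v = shift m (- int p) v"
proof -
  have "int (snd v) + int (12 * k) = (int (snd v) - int p) + int m" using assms by simp
  then show ?thesis unfolding shift_def by (metis mod_add_self2 uminus_add_conv_diff add.commute)
qed

lemma nat_eq_mod_iff_int:
  "t = (s + c) mod m \<longleftrightarrow> int t = (int s + int c) mod int m"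
  by (metis of_nat_add of_nat_eq_iff zmod_int)

lemma shift_arc:
  assumes m: "0 < m" and e: "(u, v) \<in> G_arcs m"
  shows "(shift m d u, shift m d v) \<in> G_arcs m"
proof -
  obtain a s b t where uv: "u = (a, s)" "v = (b, t)" by (cases u, cases v)
  define s' t' where "s' = snd (shift m d u)" and "t' = snd (shift m d v)"
  have st: "s < m" "t < m" "t = (s + 1) mod m \<or> t = (s + 3) mod m \<or> (a \<noteq> b \<and> s = t)"
    using e uv by (auto simp: G_arcs_def)
  have s': "int s' = (int s + d) mod int m" and t': "int t' = (int t + d) mod int m"
    using uv by (simp_all add: s'_def t'_def int_snd_shift[OF m])
  have step: "t' = (s' + c) mod m" if "t = (s + c) mod m" for c
  proof -
    have t: "int t = (int s + int c) mod int m" using that by (simp add: nat_eq_mod_iff_int)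
    have "int t' = (int s + int c + d) mod int m" unfolding t' t mod_add_left_eq ..
    also have "\<dots> = (int s + d + int c) mod int m" by (simp only: ac_simps)
    also have "\<dots> = (int s' + int c) mod int m" unfolding s' mod_add_left_eq ..
    finally show ?thesis by (simp add: nat_eq_mod_iff_int)
  qed
  have "t' = (s' + 1) mod m \<or> t' = (s' + 3) mod m \<or> (a \<noteq> b \<and> s' = t')"
  proof -
    have "s = t \<Longrightarrow> s' = t'" using s' t' by (simp flip: of_nat_eq_iff)
    then show ?thesis using st(3) step[of 1] step[of 3] by blast
  qed
  moreover have "s' < m" "t' < m"
    using shift_in_verts[OF m, of d u] shift_in_verts[OF m, of d v]
    by (auto simp: s'_def t'_def verts_def mem_Times_iff)
  moreover have "shift m d u = (a, s')" "shift m d v = (b, t')"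
    using uv by (simp_all add: s'_def t'_def prod_eq_iff)
  ultimately show ?thesis unfolding G_arcs_def by auto
qed

lemma walk_shift:
  assumes "0 < m" "walk m P"
  shows "walk m (map (shift m d) P)"
proof -
  have "walk_arcs P \<subseteq> G_arcs m" using assms(2) unfolding walk_iff_arcs by simp
  then have "walk_arcs (map (shift m d) P) \<subseteq> G_arcs m"
    unfolding walk_arcs_map using shift_arc[OF assms(1)] by auto
  then show ?thesis using assms shift_in_verts unfolding walk_iff_arcs by auto
qed

section \<open>Copies of blocks\<close>

text \<open>A block is a dipath Q, R, S or T of (C6); its t-th copy rho^(12t) Q lies in V_(t+1).\<close>

definition copy :: "nat \<Rightarrow> nat \<Rightarrow> vtx list \<Rightarrow> vtx list" where
  "copy m t P = map (shift m (int (12 * t))) P"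

definition copies :: "nat \<Rightarrow> nat \<Rightarrow> vtx list \<Rightarrow> vtx list list" where
  "copies m k P = map (\<lambda>t. copy m t P) [0..<k]"

definition block :: "nat \<Rightarrow> nat \<Rightarrow> vtx list \<Rightarrow> bool" where
  "block m p P \<longleftrightarrow> dipath m P \<and> last P = shift m 12 (hd P) \<and> set (butlast P) \<subseteq> V1 p"

lemma copies_0 [simp]: "copies m 0 P = []"
  by (simp add: copies_def)

lemma copies_Suc: "copies m (Suc k) P = copies m k P @ [copy m k P]"
  by (simp add: copies_def)

lemma len_copies: "(\<Sum>S\<leftarrow>copies m k P. len S) = k * len P"
  by (induction k) (simp_all add: copies_Suc copy_def len_def)

lemma walk_copies:
  assumes "0 < m" "1 \<le> k \<Longrightarrow> block m p P" "S \<in> set (copies m k P)"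
  shows "walk m S"
proof -
  have "1 \<le> k" using assms(3) by (cases k) auto
  then have "walk m P" using assms(2) by (simp add: block_def dipath_def)
  then show ?thesis using assms(1,3) by (auto simp: copies_def copy_def intro: walk_shift)
qed

lemma block_verts: "block m p P \<Longrightarrow> set P \<subseteq> verts m"
  by (simp add: block_def dipath_def walk_def)

lemma copy_tailE:
  assumes "block m p P" "p + 12 * k \<le> m" "t < k" "v \<in> set (butlast (copy m t P))"
  obtains u where "u \<in> set (butlast P)" "v = shift m (int (12 * t)) u"
    and "p + 12 * t \<le> snd v" "snd v \<le> p + 11 + 12 * t"
proof -
  obtain u where u: "u \<in> set (butlast P)" "v = shift m (int (12 * t)) u"
    using assms(4) by (auto simp: copy_def map_butlast[symmetric])
  have "p \<le> snd u" "snd u \<le> p + 11" using assms(1) u(1) by (auto simp: block_def V1_def)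
  moreover have "snd v = snd u + 12 * t"
    unfolding u(2) using calculation assms(2,3) by (intro snd_shift_no_wrap) linarith
  ultimately show ?thesis using that u by simp
qed

lemma copy_tails_meet:
  assumes "block m p P" "block m p P'" "p + 12 * k \<le> m" "t < k" "t' < k"
    and "v \<in> set (butlast (copy m t P))" "v \<in> set (butlast (copy m t' P'))"
  shows "t = t' \<and> set (butlast P) \<inter> set (butlast P') \<noteq> {}"
proof -
  obtain u where u: "u \<in> set (butlast P)" "v = shift m (int (12 * t)) u"
      "p + 12 * t \<le> snd v" "snd v \<le> p + 11 + 12 * t"
    using copy_tailE[OF assms(1,3,4,6)] by blast
  obtain u' where u': "u' \<in> set (butlast P')" "v = shift m (int (12 * t')) u'"
      "p + 12 * t' \<le> snd v" "snd v \<le> p + 11 + 12 * t'"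
    using copy_tailE[OF assms(2,3,5,7)] by blast
  have t: "t = t'" using u(3,4) u'(3,4) by linarith
  have "u \<in> verts m" "u' \<in> verts m"
    using u(1) u'(1) block_verts[OF assms(1)] block_verts[OF assms(2)] by (auto dest: in_set_butlastD)
  then have "u = u'" using u(2) u'(2) t inj_onD[OF shift_inj_on] by metis
  then show ?thesis using t u(1) u'(1) by blast
qed

lemma copy_arcs_meet:
  assumes "block m p P" "block m p P'" "p + 12 * k \<le> m" "t < k" "t' < k"
    and "e \<in> walk_arcs (copy m t P)" "e \<in> walk_arcs (copy m t' P')"
  shows "t = t' \<and> walk_arcs P \<inter> walk_arcs P' \<noteq> {}"
proof -
  obtain a c where ac: "(a, c) \<in> walk_arcs P" "e = (shift m (int (12 * t)) a, shift m (int (12 * t)) c)"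
    using assms(6) by (auto simp: copy_def walk_arcs_map)
  obtain a' c' where ac': "(a', c') \<in> walk_arcs P'" "e = (shift m (int (12 * t')) a', shift m (int (12 * t')) c')"
    using assms(7) by (auto simp: copy_def walk_arcs_map)
  have "fst e \<in> set (butlast (copy m t P))" "fst e \<in> set (butlast (copy m t' P'))"
    using assms(6,7) walk_arcs_memD by (metis prod.collapse)+
  then have t: "t = t'" using copy_tails_meet[OF assms(1-5)] by blast
  have "a \<in> verts m" "c \<in> verts m" "a' \<in> verts m" "c' \<in> verts m"
    using walk_arcs_memD ac(1) ac'(1) block_verts[OF assms(1)] block_verts[OF assms(2)]
    by (meson in_set_butlastD subsetD)+
  then have "a = a'" "c = c'" using ac(2) ac'(2) t inj_onD[OF shift_inj_on] by (metis prod.inject)+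
  then show ?thesis using t ac(1) ac'(1) by blast
qed

lemma distinct_copy_tails:
  assumes "block m p P" "p + 12 * k \<le> m"
  shows "distinct (concat (map butlast (copies m k P)))"
  using assms(2)
proof (induction k)
  case (Suc k)
  have "distinct (butlast P)" using assms(1) by (simp add: block_def dipath_def distinct_butlast)
  moreover have "set (butlast P) \<subseteq> verts m"
    using block_verts[OF assms(1)] by (auto dest: in_set_butlastD)
  then have "inj_on (shift m (int (12 * k))) (set (butlast P))"
    by (rule inj_on_subset[OF shift_inj_on])
  ultimately have "distinct (butlast (copy m k P))"
    by (simp add: copy_def map_butlast[symmetric] distinct_map)
  moreover have "set (butlast (copy m k P)) \<inter> set (butlast (copy m t P)) = {}" if "t < k" for t
    using copy_tails_meet[OF assms(1) assms(1) Suc.prems lessI less_SucI[OF that]] that by blast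
  ultimately show ?case using Suc by (simp add: copies_Suc copies_def) fastforce
qed simp

section \<open>Segments and the cycles through them\<close>

text \<open>
  The flag marks the blocks, which are repeated k times through V_1, ..., V_k; the other
  paths W, X, Y, Z stay in V_0. For k = 0 nothing is repeated and nothing is required of a block.
\<close>

definition placed :: "nat \<Rightarrow> nat \<Rightarrow> nat \<Rightarrow> bool \<Rightarrow> vtx list \<Rightarrow> bool" where
  "placed m p k \<beta> P \<longleftrightarrow> (if \<beta> then 1 \<le> k \<longrightarrow> block m p P else set (butlast P) \<subseteq> V0 p)"

definition segs :: "nat \<Rightarrow> nat \<Rightarrow> bool \<Rightarrow> vtx list \<Rightarrow> vtx list list" where
  "segs m k \<beta> P = (if \<beta> then copies m k P else [P])"

lemma segs_tail_level:
  assumes "placed m p k \<beta> P" "p + 12 * k \<le> m" "S \<in> set (segs m k \<beta> P)" "v \<in> set (butlast S)"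
  shows "p \<le> snd v \<longleftrightarrow> \<beta>"
proof (cases \<beta>)
  case True
  then obtain t where "t < k" "S = copy m t P" using assms(3) by (auto simp: segs_def copies_def)
  moreover have "block m p P" using assms(1) True calculation(1) by (simp add: placed_def)
  ultimately have "p + 12 * t \<le> snd v" using copy_tailE assms(2,4) by blast
  then show ?thesis using True by simp
next
  case False
  then show ?thesis using assms(1,3,4) by (auto simp: placed_def segs_def V0_def)
qed

lemma segs_tails_disjoint:
  assumes "p + 12 * k \<le> m" "placed m p k \<beta> P" "placed m p k \<beta>' P'"
    and "\<beta> = \<beta>' \<Longrightarrow> set (butlast P) \<inter> set (butlast P') = {}"
  shows "set (concat (map butlast (segs m k \<beta> P))) \<inter> set (concat (map butlast (segs m k \<beta>' P'))) = {}"
proof (rule ccontr)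
  assume "\<not> ?thesis"
  then obtain v S S' where S: "S \<in> set (segs m k \<beta> P)" "v \<in> set (butlast S)"
    and S': "S' \<in> set (segs m k \<beta>' P')" "v \<in> set (butlast S')"
    by auto
  have \<beta>: "\<beta> = \<beta>'"
    using segs_tail_level[OF assms(2,1) S] segs_tail_level[OF assms(3,1) S'] by simp
  show False
  proof (cases \<beta>)
    case True
    obtain t t' where "t < k" "S = copy m t P" "t' < k" "S' = copy m t' P'"
      using S(1) S'(1) True \<beta> by (auto simp: segs_def copies_def)
    moreover have "block m p P" "block m p P'"
      using assms(2,3) True \<beta> calculation(1) by (simp_all add: placed_def)
    ultimately show False using copy_tails_meet assms(1,4) S(2) S'(2) \<beta> by metis
  next
    case False
    then show False using S S' \<beta> assms(4) by (auto simp: segs_def)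
  qed
qed

lemma segs_arcs_disjoint:
  assumes "p + 12 * k \<le> m" "placed m p k \<beta> P" "placed m p k \<beta>' P'"
    and "walk_arcs P \<inter> walk_arcs P' = {}"
  shows "(\<Union>S\<in>set (segs m k \<beta> P). walk_arcs S) \<inter> (\<Union>S\<in>set (segs m k \<beta>' P'). walk_arcs S) = {}"
proof (rule ccontr)
  assume "\<not> ?thesis"
  then obtain e S S' where S: "S \<in> set (segs m k \<beta> P)" "e \<in> walk_arcs S"
    and S': "S' \<in> set (segs m k \<beta>' P')" "e \<in> walk_arcs S'"
    by auto
  have "fst e \<in> set (butlast S)" "fst e \<in> set (butlast S')"
    using S(2) S'(2) walk_arcs_memD by (metis prod.collapse)+
  then have \<beta>: "\<beta> = \<beta>'"
    using segs_tail_level[OF assms(2,1) S(1)] segs_tail_level[OF assms(3,1) S'(1)] by metis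
  show False
  proof (cases \<beta>)
    case True
    obtain t t' where "t < k" "S = copy m t P" "t' < k" "S' = copy m t' P'"
      using S(1) S'(1) True \<beta> by (auto simp: segs_def copies_def)
    moreover have "block m p P" "block m p P'"
      using assms(2,3) True \<beta> calculation(1) by (simp_all add: placed_def)
    ultimately show False using copy_arcs_meet assms(1,4) S(2) S'(2) by metis
  next
    case False
    then show False using S S' \<beta> assms(4) by (auto simp: segs_def)
  qed
qed

lemma distinct_segs_tails:
  assumes "p + 12 * k \<le> m" "placed m p k \<beta> P" "distinct (butlast P)"
  shows "distinct (concat (map butlast (segs m k \<beta> P)))"
proof (cases "\<beta> \<and> 1 \<le> k")
  case True
  then show ?thesis using distinct_copy_tails assms(1,2) by (simp add: placed_def segs_def)
next
  case False
  then have "segs m k \<beta> P = (if \<beta> then [] else [P])" by (auto simp: segs_def copies_def)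
  then show ?thesis using assms(3) by simp
qed

definition segments ::
    "nat \<Rightarrow> nat \<Rightarrow> vtx list list \<Rightarrow> (nat \<Rightarrow> bool) \<Rightarrow> nat list \<Rightarrow> vtx list list" where
  "segments m k B \<beta> rs = concat (map (\<lambda>r. segs m k (\<beta> r) (B ! r)) rs)"

text \<open>
  The cycle through the paths at positions rs of a basic set, as a vertex sequence: each path
  contributes all its vertices but the last, a block contributes its k copies.
\<close>

definition segment_cycle ::
    "nat \<Rightarrow> nat \<Rightarrow> vtx list list \<Rightarrow> (nat \<Rightarrow> bool) \<Rightarrow> nat list \<Rightarrow> vtx list" where
  "segment_cycle m k B \<beta> rs = concat (map butlast (segments m k B \<beta> rs))"

lemma segment_cycle_append:
  "segment_cycle m k B \<beta> (rs @ rs') = segment_cycle m k B \<beta> rs @ segment_cycle m k B \<beta> rs'"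
  by (simp add: segment_cycle_def segments_def)

lemma segments_arcs_disjoint:
  assumes "p + 12 * k \<le> m"
    and "\<forall>r\<in>set rs. placed m p k (\<beta> r) (B ! r)" "\<forall>r'\<in>set rs'. placed m p k (\<beta>' r') (B' ! r')"
    and "\<And>r r'. r \<in> set rs \<Longrightarrow> r' \<in> set rs' \<Longrightarrow> walk_arcs (B ! r) \<inter> walk_arcs (B' ! r') = {}"
  shows "(\<Union>S\<in>set (segments m k B \<beta> rs). walk_arcs S)
    \<inter> (\<Union>S\<in>set (segments m k B' \<beta>' rs'). walk_arcs S) = {}"
proof -
  have "(\<Union>S\<in>set (segs m k (\<beta> r) (B ! r)). walk_arcs S)
      \<inter> (\<Union>S\<in>set (segs m k (\<beta>' r') (B' ! r')). walk_arcs S) = {}"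
    if "r \<in> set rs" "r' \<in> set rs'" for r r'
    using segs_arcs_disjoint[OF assms(1)] assms(2-4) that by blast
  then show ?thesis by (auto simp: segments_def)
qed

lemma distinct_segment_cycle:
  assumes "p + 12 * k \<le> m" "distinct rs"
    and "\<forall>r\<in>set rs. placed m p k (\<beta> r) (B ! r) \<and> distinct (butlast (B ! r))"
    and "\<forall>r\<in>set rs. \<forall>r'\<in>set rs. r \<noteq> r' \<longrightarrow> \<beta> r = \<beta> r' \<longrightarrow>
      set (butlast (B ! r)) \<inter> set (butlast (B ! r')) = {}"
  shows "distinct (segment_cycle m k B \<beta> rs)"
  unfolding segment_cycle_def using assms(2-4)
proof (induction rs)
  case (Cons r rs)
  have "set (concat (map butlast (segs m k (\<beta> r) (B ! r))))
      \<inter> set (concat (map butlast (segs m k (\<beta> r') (B ! r')))) = {}" if "r' \<in> set rs" for r'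
    using Cons.prems that by (intro segs_tails_disjoint[OF assms(1)]) auto
  then show ?case
    using Cons distinct_segs_tails[OF assms(1)] by (auto simp: segments_def)
qed (simp add: segments_def)

lemma successively_linked_copies:
  assumes "0 < m" "walk m A" "1 \<le> k \<Longrightarrow> block m p Q" "last A = hd Q"
    and "hd B = shift m (int (12 * k)) (last A)" "successively linked (B # Rs)"
  shows "successively linked (A # copies m k Q @ B # Rs)"
  using assms(3,5,6)
proof (induction k arbitrary: B Rs)
  case 0
  have "last A \<in> verts m" using assms(2) by (auto simp: walk_def)
  then have "last A = hd B" using "0.prems"(2) by (simp add: shift_eq_self)
  then show ?case using "0.prems"(3) by simp
next
  case (Suc k)
  have Q: "block m p Q" using Suc.prems(1) by simp
  then have "Q \<noteq> []" by (auto simp: block_def dipath_def walk_def)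
  then have hd_copy: "hd (copy m k Q) = shift m (int (12 * k)) (last A)"
    using assms(4) by (simp add: copy_def hd_map)
  have "last (copy m k Q) = shift m (int (12 * k)) (shift m 12 (hd Q))"
    using Q \<open>Q \<noteq> []\<close> by (simp add: copy_def last_map block_def)
  also have "\<dots> = hd B" using Suc.prems(2) assms(1,4) by (simp add: shift_shift add.commute)
  finally have "successively linked (copy m k Q # B # Rs)" using Suc.prems(3) by simp
  then have "successively linked (A # copies m k Q @ copy m k Q # B # Rs)"
    using Suc.IH Q hd_copy by blast
  then show ?case by (simp add: copies_Suc)
qed

lemma cycle_through_two_blocks:
  assumes m: "m = p + 12 * k" "0 < m" and W: "walk m W" and X: "walk m X"
    and Q: "1 \<le> k \<Longrightarrow> block m p Q" and R: "1 \<le> k \<Longrightarrow> block m p R"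
    and "last W = hd Q" "last X = hd R"
    and "hd X = shift m (- int p) (last W)" "hd W = shift m (- int p) (last X)"
    and "len W + len X + k * (len Q + len R) = m"
    and "distinct (concat (map butlast (W # copies m k Q @ X # copies m k R)))"
  shows "dicycle m (concat (map butlast (W # copies m k Q @ X # copies m k R)))"
    and "cyc_arcs (concat (map butlast (W # copies m k Q @ X # copies m k R)))
      = (\<Union>S\<in>set (W # copies m k Q @ X # copies m k R). walk_arcs S)"
proof -
  let ?Ps = "W # copies m k Q @ X # copies m k R"
  have "successively linked (X # copies m k R @ [W])"
    using successively_linked_copies[OF m(2) X R, where B = W and Rs = "[]"] assms(8,10)
      shift_12k[OF m(1)]
    by simp
  then have "successively linked (?Ps @ [hd ?Ps])"
    using successively_linked_copies[OF m(2) W Q, where B = X and Rs = "copies m k R @ [W]"] assms(7,9)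
      shift_12k[OF m(1)]
    by simp
  moreover have "\<forall>S\<in>set ?Ps. walk m S"
    using W X walk_copies[OF m(2) Q] walk_copies[OF m(2) R] by auto
  moreover have "(\<Sum>S\<leftarrow>?Ps. len S) = m"
    using assms(11) by (simp add: len_copies algebra_simps)
  ultimately show "dicycle m (concat (map butlast ?Ps))"
    "cyc_arcs (concat (map butlast ?Ps)) = (\<Union>S\<in>set ?Ps. walk_arcs S)"
    using dicycle_of_closed_chain[OF m(2)] assms(12) by blast+
qed

lemma cycle_through_block:
  assumes m: "m = p + 12 * k" "0 < m" and X: "walk m X" and R: "1 \<le> k \<Longrightarrow> block m p R"
    and "last X = hd R" "hd X = shift m (- int p) (last X)"
    and "len X + k * len R = m"
    and "distinct (concat (map butlast (X # copies m k R)))"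
  shows "dicycle m (concat (map butlast (X # copies m k R)))"
    and "cyc_arcs (concat (map butlast (X # copies m k R))) = (\<Union>S\<in>set (X # copies m k R). walk_arcs S)"
proof -
  let ?Ps = "X # copies m k R"
  have "successively linked (?Ps @ [hd ?Ps])"
    using successively_linked_copies[OF m(2) X R, where B = X and Rs = "[]"] assms(5,6)
      shift_12k[OF m(1)]
    by simp
  moreover have "\<forall>S\<in>set ?Ps. walk m S"
    using X walk_copies[OF m(2) R] by auto
  moreover have "(\<Sum>S\<leftarrow>?Ps. len S) = m"
    using assms(7) by (simp add: len_copies)
  ultimately show "dicycle m (concat (map butlast ?Ps))"
    "cyc_arcs (concat (map butlast ?Ps)) = (\<Union>S\<in>set ?Ps. walk_arcs S)"
    using dicycle_of_closed_chain[OF m(2)] assms(8) by blast+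
qed

section \<open>The cycles of a basic set\<close>

lemma butlast_subset_hd_internal: "P \<noteq> [] \<Longrightarrow> set (butlast P) \<subseteq> insert (hd P) (internal P)"
  by (cases P) (auto simp: internal_def butlast_tl[symmetric] dest: in_set_butlastD)

lemma block_of_C6:
  assumes "m = p + 12 * k" "1 \<le> k" "dipath m Q" "C6 m p Q" "C4 m p A" "tgt A = src Q"
  shows "block m p Q"
proof -
  obtain i where i: "i \<le> 2" "snd (tgt A) = (p + i) mod m" using assms(5) by (auto simp: C4_def)
  then have "snd (hd Q) = p + i" using assms(1,2,6) by (simp add: src_def)
  moreover have "Q \<noteq> []" using assms(3) by (simp add: dipath_def walk_def)
  ultimately have "set (butlast Q) \<subseteq> V1 p"
    using butlast_subset_hd_internal[of Q] assms(4) i(1) by (auto simp: C6_def V1_def)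
  then show ?thesis using assms(3,4) by (simp add: block_def C6_def tgt_def src_def)
qed

lemma butlast_closed_pair:
  assumes "dipath m W" "dipath m X" "src X = shift m d (tgt W)" "d mod int m = 0"
  shows "butlast (W @ tl X) = butlast W @ butlast X"
proof -
  have "W \<noteq> []" "X \<noteq> []" "tgt W \<in> verts m" using assms(1,2) by (auto simp: dipath_def walk_def tgt_def)
  moreover have "last W = hd X" using assms(3,4) calculation(3) by (simp add: shift_eq_self tgt_def src_def)
  ultimately have "W @ tl X = butlast W @ X"
    by (metis append_butlast_last_id append.assoc append_Cons list.collapse self_append_conv2)
  then show ?thesis using \<open>X \<noteq> []\<close> by (simp add: butlast_append)
qed

definition cycle_pair ::
    "nat \<Rightarrow> nat \<Rightarrow> nat \<Rightarrow> vtx list list \<Rightarrow> (nat \<Rightarrow> bool) \<Rightarrow> (nat \<Rightarrow> nat list) \<Rightarrow> bool" where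
  "cycle_pair m p k B \<beta> rs \<longleftrightarrow>
    (\<forall>b<2. dicycle m (segment_cycle m k B \<beta> (rs b)) \<and>
      cyc_arcs (segment_cycle m k B \<beta> (rs b)) = (\<Union>S\<in>set (segments m k B \<beta> (rs b)). walk_arcs S) \<and>
      (\<forall>r\<in>set (rs b). r < length B \<and> placed m p k (\<beta> r) (B ! r))) \<and>
    set (segment_cycle m k B \<beta> (rs 0)) \<inter> set (segment_cycle m k B \<beta> (rs 1)) = {} \<and>
    set (rs 0) \<inter> set (rs 1) = {}"

lemma type2_placed:
  assumes "type2_basic m p k B" "m = p + 12 * k" "r < 8"
  shows "placed m p k (4 \<le> r) (B ! r)"
proof -
  have C4: "C4 m p (B ! 0)" "C4 m p (B ! 1)" "C4 m p (B ! 2)" "C4 m p (B ! 3)"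
    and C5: "tgt (B ! 0) = src (B ! 4)" "tgt (B ! 1) = src (B ! 5)"
      "tgt (B ! 2) = src (B ! 6)" "tgt (B ! 3) = src (B ! 7)"
    and C6: "1 \<le> k \<longrightarrow> C6 m p (B ! 4) \<and> C6 m p (B ! 5) \<and> C6 m p (B ! 6) \<and> C6 m p (B ! 7)"
    and "dipath m (B ! r)"
    using assms(1,3) unfolding type2_basic_def Let_def by simp_all
  have r: "r = 0 \<or> r = 1 \<or> r = 2 \<or> r = 3 \<or> r = 4 \<or> r = 5 \<or> r = 6 \<or> r = 7"
    using assms(3) by auto
  show ?thesis
  proof (cases "r < 4")
    case True
    then have "C4 m p (B ! r)" using r C4 by auto
    then show ?thesis using True by (simp add: placed_def C4_def)
  next
    case False
    then have "1 \<le> k \<Longrightarrow> C6 m p (B ! r) \<and> C4 m p (B ! (r - 4)) \<and> tgt (B ! (r - 4)) = src (B ! r)"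
      using r C4 C5 C6 by auto
    then show ?thesis
      using block_of_C6[OF assms(2), of "B ! r" "B ! (r - 4)"] \<open>dipath m (B ! r)\<close> False
      by (auto simp: placed_def)
  qed
qed

lemma type2_distinct_cycles:
  assumes "type2_basic m p k B" "m = p + 12 * k"
  shows "distinct (segment_cycle m k B (\<lambda>r. 4 \<le> r) [0, 4, 1, 5] @
    segment_cycle m k B (\<lambda>r. 4 \<le> r) [2, 6, 3, 7])"
proof (cases "k = 0")
  case True
  \<comment> \<open>no blocks are used, and (C1) itself provides the two cycles\<close>
  have "dipath m (B ! r)" if "r < 8" for r using assms(1) that by (simp add: type2_basic_def)
  moreover have "src (B ! 1) = shift m (- int p) (tgt (B ! 0))" "src (B ! 3) = shift m (- int p) (tgt (B ! 2))"
    and cycles: "closed_walk_type m 2 (B ! 0 @ tl (B ! 1))" "closed_walk_type m 2 (B ! 2 @ tl (B ! 3))"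
    and disjoint: "(set (B ! 0) \<union> set (B ! 1)) \<inter> (set (B ! 2) \<union> set (B ! 3)) = {}"
    using assms(1) True unfolding type2_basic_def Let_def by simp_all
  ultimately have closed: "butlast (B ! 0 @ tl (B ! 1)) = butlast (B ! 0) @ butlast (B ! 1)"
      "butlast (B ! 2 @ tl (B ! 3)) = butlast (B ! 2) @ butlast (B ! 3)"
    using butlast_closed_pair[of m "B ! 0" "B ! 1" "- int p"]
      butlast_closed_pair[of m "B ! 2" "B ! 3" "- int p"] assms(2) True
    by simp_all
  have C: "segment_cycle m k B (\<lambda>r. 4 \<le> r) [0, 4, 1, 5] = butlast (B ! 0) @ butlast (B ! 1)"
      "segment_cycle m k B (\<lambda>r. 4 \<le> r) [2, 6, 3, 7] = butlast (B ! 2) @ butlast (B ! 3)"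
    using True by (simp_all add: segment_cycle_def segments_def segs_def)
  have "distinct (butlast (B ! 0) @ butlast (B ! 1))" "distinct (butlast (B ! 2) @ butlast (B ! 3))"
    using cycles unfolding closed[symmetric] by (simp_all add: closed_walk_type_def cycle_of_type_def dicycle_def)
  moreover have "set (butlast (B ! 0) @ butlast (B ! 1)) \<inter> set (butlast (B ! 2) @ butlast (B ! 3)) = {}"
    using disjoint by (auto dest: in_set_butlastD)
  ultimately show ?thesis unfolding C distinct_append by blast
next
  case False
  have "length B = 8" "\<forall>P\<in>set B. dipath m P"
    and blocks: "\<forall>i\<in>{4..7}. \<forall>j\<in>{4..7}. i \<noteq> j \<longrightarrow> set (B ! i) \<inter> set (B ! j) = {}"
    and bases: "\<forall>i<4. \<forall>j<4. i \<noteq> j \<longrightarrow> set (B ! i) \<inter> set (B ! j) = {}"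
    using assms(1) False unfolding type2_basic_def Let_def by simp_all
  then have dipath: "dipath m (B ! r)" if "r < 8" for r using that by simp
  have disjoint: "set (butlast (B ! r)) \<inter> set (butlast (B ! r')) = {}"
    if "r < 8" "r' < 8" "r \<noteq> r'" "(4 \<le> r) = (4 \<le> r')" for r r'
  proof -
    have "set (B ! r) \<inter> set (B ! r') = {}"
      using that blocks bases by (cases "4 \<le> r") auto
    then show ?thesis by (auto dest: in_set_butlastD)
  qed
  have placed: "placed m p k (4 \<le> r) (B ! r) \<and> distinct (butlast (B ! r))" if "r < 8" for r
    using type2_placed[OF assms that] dipath[OF that] by (simp add: dipath_def distinct_butlast)
  have "distinct (segment_cycle m k B (\<lambda>r. 4 \<le> r) ([0, 4, 1, 5] @ [2, 6, 3, 7]))"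
  proof (rule distinct_segment_cycle[where p = p])
    show "\<forall>r\<in>set ([0, 4, 1, 5] @ [2, 6, 3, 7]). placed m p k (4 \<le> r) (B ! r) \<and> distinct (butlast (B ! r))"
      by (intro ballI placed) auto
    show "\<forall>r\<in>set ([0, 4, 1, 5] @ [2, 6, 3, 7]). \<forall>r'\<in>set ([0, 4, 1, 5] @ [2, 6, 3, 7]).
        r \<noteq> r' \<longrightarrow> (4 \<le> r) = (4 \<le> r') \<longrightarrow> set (butlast (B ! r)) \<inter> set (butlast (B ! r')) = {}"
      by (intro ballI impI disjoint) auto
  qed (use assms(2) in simp_all)
  then show ?thesis by (simp only: segment_cycle_append)
qed

lemma type2_cycle:
  assumes "type2_basic m p k B" "m = p + 12 * k" "0 < p" "b < 2"
    and "distinct (segment_cycle m k B (\<lambda>r. 4 \<le> r) [2 * b, 2 * b + 4, 2 * b + 1, 2 * b + 5])"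
  shows "dicycle m (segment_cycle m k B (\<lambda>r. 4 \<le> r) [2 * b, 2 * b + 4, 2 * b + 1, 2 * b + 5])"
    and "cyc_arcs (segment_cycle m k B (\<lambda>r. 4 \<le> r) [2 * b, 2 * b + 4, 2 * b + 1, 2 * b + 5]) =
      (\<Union>S\<in>set (segments m k B (\<lambda>r. 4 \<le> r) [2 * b, 2 * b + 4, 2 * b + 1, 2 * b + 5]). walk_arcs S)"
proof -
  let ?W = "B ! (2 * b)" and ?X = "B ! (2 * b + 1)" and ?Q = "B ! (2 * b + 4)" and ?R = "B ! (2 * b + 5)"
  have segments: "segments m k B (\<lambda>r. 4 \<le> r) [2 * b, 2 * b + 4, 2 * b + 1, 2 * b + 5] =
      ?W # copies m k ?Q @ ?X # copies m k ?R"
    using assms(4) by (simp add: segments_def segs_def)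
  have "src (B ! 1) = shift m (- int p) (tgt (B ! 0))" "src (B ! 0) = shift m (- int p) (tgt (B ! 1))"
    "src (B ! 3) = shift m (- int p) (tgt (B ! 2))" "src (B ! 2) = shift m (- int p) (tgt (B ! 3))"
    "len (B ! 0) + len (B ! 1) = p" "len (B ! 2) + len (B ! 3) = p"
    "k \<ge> 1 \<longrightarrow> len (B ! 4) + len (B ! 5) = 12 \<and> len (B ! 6) + len (B ! 7) = 12"
    "tgt (B ! 0) = src (B ! 4)" "tgt (B ! 1) = src (B ! 5)" "tgt (B ! 2) = src (B ! 6)" "tgt (B ! 3) = src (B ! 7)"
    using assms(1) unfolding type2_basic_def Let_def by simp_all
  moreover have "b = 0 \<or> b = 1" using assms(4) by auto
  ultimately have "src ?X = shift m (- int p) (tgt ?W)" "src ?W = shift m (- int p) (tgt ?X)"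
    "len ?W + len ?X = p" "1 \<le> k \<Longrightarrow> len ?Q + len ?R = 12"
    "tgt ?W = src ?Q" "tgt ?X = src ?R"
    by auto
  moreover have "len ?W + len ?X + k * (len ?Q + len ?R) = m"
    using calculation(3,4) assms(2) by (cases "k = 0") auto
  moreover have "walk m ?W" "walk m ?X" using assms(1,4) by (simp_all add: type2_basic_def dipath_def)
  moreover have "1 \<le> k \<Longrightarrow> block m p ?Q" "1 \<le> k \<Longrightarrow> block m p ?R"
    using type2_placed[OF assms(1,2), of "2 * b + 4"] type2_placed[OF assms(1,2), of "2 * b + 5"] assms(4)
    by (simp_all add: placed_def)
  ultimately show "dicycle m (segment_cycle m k B (\<lambda>r. 4 \<le> r) [2 * b, 2 * b + 4, 2 * b + 1, 2 * b + 5])"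
    "cyc_arcs (segment_cycle m k B (\<lambda>r. 4 \<le> r) [2 * b, 2 * b + 4, 2 * b + 1, 2 * b + 5]) =
      (\<Union>S\<in>set (segments m k B (\<lambda>r. 4 \<le> r) [2 * b, 2 * b + 4, 2 * b + 1, 2 * b + 5]). walk_arcs S)"
    using cycle_through_two_blocks[of m p k ?W ?X ?Q ?R] assms(2,3,5)
    unfolding segment_cycle_def segments tgt_def src_def by simp_all
qed

lemma type2_cycle_pair:
  assumes "type2_basic m p k B" "m = p + 12 * k" "0 < p"
  shows "cycle_pair m p k B (\<lambda>r. 4 \<le> r) (\<lambda>b. [2 * b, 2 * b + 4, 2 * b + 1, 2 * b + 5])"
proof -
  have distinct: "distinct (segment_cycle m k B (\<lambda>r. 4 \<le> r) [2 * b, 2 * b + 4, 2 * b + 1, 2 * b + 5])"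
    if "b < 2" for b
    using type2_distinct_cycles[OF assms(1,2)] that by (auto simp: less_2_cases_iff)
  have "length B = 8" using assms(1) by (simp add: type2_basic_def)
  then have placed: "r < length B \<and> placed m p k (4 \<le> r) (B ! r)" if "r < 8" for r
    using type2_placed[OF assms(1,2) that] that by simp
  have "\<forall>r\<in>set [2 * b, 2 * b + 4, 2 * b + 1, 2 * b + 5]. r < length B \<and> placed m p k (4 \<le> r) (B ! r)"
    if "b < 2" for b
    by (intro ballI placed) (use that in auto)
  then show ?thesis
    unfolding cycle_pair_def using type2_cycle[OF assms] distinct type2_distinct_cycles[OF assms(1,2)]
    by auto
qed

lemma type1_placed:
  assumes "type1_basic m p k B" "m = p + 12 * k" "r < 4"
  shows "placed m p k (2 \<le> r) (B ! r)"
proof -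
  have C4: "C4 m p (B ! 0)" "C4 m p (B ! 1)"
    and C5: "tgt (B ! 0) = src (B ! 2)" "tgt (B ! 1) = src (B ! 3)"
    and C6: "1 \<le> k \<longrightarrow> C6 m p (B ! 2) \<and> C6 m p (B ! 3)"
    and dipath: "dipath m (B ! 2)" "dipath m (B ! 3)"
    using assms(1) unfolding type1_basic_def Let_def by simp_all
  have r: "r = 0 \<or> r = 1 \<or> r = 2 \<or> r = 3" using assms(3) by auto
  show ?thesis
  proof (cases "r < 2")
    case True
    then have "C4 m p (B ! r)" using r C4 by auto
    then show ?thesis using True by (simp add: placed_def C4_def)
  next
    case False
    then have "1 \<le> k \<Longrightarrow> dipath m (B ! r) \<and> C6 m p (B ! r) \<and> C4 m p (B ! (r - 2)) \<and>
        tgt (B ! (r - 2)) = src (B ! r)"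
      using r C4 C5 C6 dipath by auto
    then show ?thesis
      using block_of_C6[OF assms(2), of "B ! r" "B ! (r - 2)"] False by (auto simp: placed_def)
  qed
qed

lemma type1_distinct_cycles:
  assumes "type1_basic m p k B" "m = p + 12 * k"
  shows "distinct (segment_cycle m k B (\<lambda>r. 2 \<le> r) [0, 2] @
    segment_cycle m k B (\<lambda>r. 2 \<le> r) [1, 3])"
proof (cases "k = 0")
  case True
  have C: "segment_cycle m k B (\<lambda>r. 2 \<le> r) [0, 2] = butlast (B ! 0)"
      "segment_cycle m k B (\<lambda>r. 2 \<le> r) [1, 3] = butlast (B ! 1)"
    using True by (simp_all add: segment_cycle_def segments_def segs_def)
  have "closed_walk_type m 1 (B ! 0)" "closed_walk_type m 1 (B ! 1)" "set (B ! 0) \<inter> set (B ! 1) = {}"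
    using assms(1) True unfolding type1_basic_def Let_def by simp_all
  then show ?thesis unfolding C
    by (auto simp: closed_walk_type_def cycle_of_type_def dicycle_def dest: in_set_butlastD)
next
  case False
  have "dipath m (B ! 0)" "dipath m (B ! 1)" "dipath m (B ! 2)" "dipath m (B ! 3)"
    and disjoint: "set (B ! 0) \<inter> set (B ! 1) = {}" "set (B ! 2) \<inter> set (B ! 3) = {}"
    using assms(1) False unfolding type1_basic_def Let_def by simp_all
  then have placed: "placed m p k (2 \<le> r) (B ! r) \<and> distinct (butlast (B ! r))" if "r < 4" for r
    using type1_placed[OF assms that] that
    by (auto simp: dipath_def distinct_butlast less_Suc_eq numeral_eq_Suc)
  have "distinct (segment_cycle m k B (\<lambda>r. 2 \<le> r) ([0, 2] @ [1, 3]))"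
  proof (rule distinct_segment_cycle[where p = p])
    show "\<forall>r\<in>set ([0, 2] @ [1, 3]). placed m p k (2 \<le> r) (B ! r) \<and> distinct (butlast (B ! r))"
      by (intro ballI placed) auto
    show "\<forall>r\<in>set ([0, 2] @ [1, 3]). \<forall>r'\<in>set ([0, 2] @ [1, 3]).
        r \<noteq> r' \<longrightarrow> (2 \<le> r) = (2 \<le> r') \<longrightarrow> set (butlast (B ! r)) \<inter> set (butlast (B ! r')) = {}"
      using disjoint by (auto dest: in_set_butlastD)
  qed (use assms(2) in simp_all)
  then show ?thesis by (simp only: segment_cycle_append)
qed

lemma type1_cycle:
  assumes "type1_basic m p k B" "m = p + 12 * k" "0 < p" "b < 2"
    and "distinct (segment_cycle m k B (\<lambda>r. 2 \<le> r) [b, b + 2])"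
  shows "dicycle m (segment_cycle m k B (\<lambda>r. 2 \<le> r) [b, b + 2])"
    and "cyc_arcs (segment_cycle m k B (\<lambda>r. 2 \<le> r) [b, b + 2]) =
      (\<Union>S\<in>set (segments m k B (\<lambda>r. 2 \<le> r) [b, b + 2]). walk_arcs S)"
proof -
  let ?X = "B ! b" and ?R = "B ! (b + 2)"
  have segments: "segments m k B (\<lambda>r. 2 \<le> r) [b, b + 2] = ?X # copies m k ?R"
    using assms(4) by (simp add: segments_def segs_def)
  have "src (B ! 0) = shift m (- int p) (tgt (B ! 0))" "src (B ! 1) = shift m (- int p) (tgt (B ! 1))"
    "len (B ! 0) = p" "len (B ! 1) = p" "k \<ge> 1 \<longrightarrow> len (B ! 2) = 12 \<and> len (B ! 3) = 12"
    "tgt (B ! 0) = src (B ! 2)" "tgt (B ! 1) = src (B ! 3)"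
    "k \<ge> 1 \<longrightarrow> dipath m (B ! 0) \<and> dipath m (B ! 1)"
    "k = 0 \<longrightarrow> closed_walk_type m 1 (B ! 0) \<and> closed_walk_type m 1 (B ! 1)"
    using assms(1) unfolding type1_basic_def Let_def by simp_all
  moreover have "b = 0 \<or> b = 1" using assms(4) by auto
  ultimately have "src ?X = shift m (- int p) (tgt ?X)" "tgt ?X = src ?R"
    "len ?X = p" "1 \<le> k \<Longrightarrow> len ?R = 12" "walk m ?X"
    by (auto simp: numeral_eq_Suc closed_walk_type_def dipath_def)
  moreover have "len ?X + k * len ?R = m"
    using calculation(3,4) assms(2) by (cases "k = 0") auto
  moreover have "1 \<le> k \<Longrightarrow> block m p ?R"
    using type1_placed[OF assms(1,2), of "b + 2"] assms(4) by (simp add: placed_def)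
  ultimately show "dicycle m (segment_cycle m k B (\<lambda>r. 2 \<le> r) [b, b + 2])"
    "cyc_arcs (segment_cycle m k B (\<lambda>r. 2 \<le> r) [b, b + 2]) =
      (\<Union>S\<in>set (segments m k B (\<lambda>r. 2 \<le> r) [b, b + 2]). walk_arcs S)"
    using cycle_through_block[of m p k ?X ?R] assms(2,3,5)
    unfolding segment_cycle_def segments tgt_def src_def by simp_all
qed

lemma type1_cycle_pair:
  assumes "type1_basic m p k B" "m = p + 12 * k" "0 < p"
  shows "cycle_pair m p k B (\<lambda>r. 2 \<le> r) (\<lambda>b. [b, b + 2])"
proof -
  \<comment> \<open>the simplifier rewrites b + 2 to Suc (Suc b), hence the unfolded numerals below\<close>
  have distinct: "distinct (segment_cycle m k B (\<lambda>r. 2 \<le> r) [b, b + 2])" if "b < 2" for b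
  proof -
    have "b = 0 \<or> b = 1" using that by auto
    then show ?thesis using type1_distinct_cycles[OF assms(1,2)] by (auto simp: numeral_eq_Suc)
  qed
  have "length B = 4" using assms(1) by (simp add: type1_basic_def)
  then have placed: "r < length B \<and> placed m p k (2 \<le> r) (B ! r)" if "r < 4" for r
    using type1_placed[OF assms(1,2) that] that by simp
  have "\<forall>r\<in>set [b, b + 2]. r < length B \<and> placed m p k (2 \<le> r) (B ! r)" if "b < 2" for b
    by (intro ballI placed) (use that in auto)
  then show ?thesis
    unfolding cycle_pair_def using type1_cycle[OF assms] distinct type1_distinct_cycles[OF assms(1,2)]
    by (auto simp: numeral_eq_Suc)
qed

section \<open>Counting arcs\<close>

definition out_neighbours :: "nat \<Rightarrow> vtx \<Rightarrow> vtx set" where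
  "out_neighbours m v = {(\<not> fst v, snd v)} \<union> UNIV \<times> {(snd v + 1) mod m, (snd v + 3) mod m}"

lemma G_arcs_Sigma: "G_arcs m = Sigma (verts m) (out_neighbours m)"
proof -
  have "e \<in> G_arcs m \<longleftrightarrow> e \<in> Sigma (verts m) (out_neighbours m)" for e
  proof -
    obtain u a v b where e: "e = ((u, a), (v, b))" by (metis prod.exhaust)
    show ?thesis unfolding e G_arcs_def verts_def out_neighbours_def
      by (cases "0 < m"; cases u; cases v) auto
  qed
  then show ?thesis by blast
qed

lemma finite_G_arcs: "finite (G_arcs m)"
  unfolding G_arcs_Sigma by (auto simp: verts_def out_neighbours_def)

lemma card_out_neighbours:
  assumes "4 \<le> m" "a < m"
  shows "card (out_neighbours m (u, a)) = 5"
proof -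
  have wrap: "(a + d) mod m = (if a + d < m then a + d else a + d - m)" if "d \<le> 3" for d
    using assms that by (simp add: le_mod_geq)
  have "(a + 1) mod m \<noteq> a" "(a + 3) mod m \<noteq> a" "(a + 1) mod m \<noteq> (a + 3) mod m"
    using assms wrap[of 1] wrap[of 3] by (simp_all split: if_splits)
  then show ?thesis by (simp add: out_neighbours_def card_insert_if)
qed

lemma card_G_arcs:
  assumes "4 \<le> m"
  shows "card (G_arcs m) = 10 * m"
proof -
  have "card (G_arcs m) = (\<Sum>v\<in>verts m. card (out_neighbours m v))"
    unfolding G_arcs_Sigma by (rule card_SigmaI) (auto simp: verts_def out_neighbours_def)
  also have "\<dots> = (\<Sum>v\<in>verts m. 5)"
    using card_out_neighbours[OF assms] by (intro sum.cong) (auto simp: verts_def)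
  finally show ?thesis by (simp add: verts_def card_cartesian_product)
qed

lemma cyc_arcs_subset_G_arcs: "dicycle m C \<Longrightarrow> cyc_arcs C \<subseteq> G_arcs m"
  unfolding dicycle_def cyc_arcs_def by auto

lemma card_cyc_arcs:
  assumes "dicycle m C"
  shows "card (cyc_arcs C) = m"
proof -
  have l: "length C = m" and d: "distinct C" using assms by (auto simp: dicycle_def)
  have "cyc_arcs C = (\<lambda>i. (C ! i, C ! (Suc i mod m))) ` {..<m}" unfolding cyc_arcs_def l by auto
  moreover have "inj_on (\<lambda>i. (C ! i, C ! (Suc i mod m))) {..<m}"
    using d l by (auto intro!: inj_onI simp: nth_eq_iff_index_eq)
  ultimately show ?thesis by (simp add: card_image)
qed

lemma Cm_factor_of_two_cycles:
  assumes "dicycle m C" "dicycle m C'" "set C \<inter> set C' = {}"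
  shows "Cm_factor m (cyc_arcs C \<union> cyc_arcs C')"
  unfolding Cm_factor_def
proof (intro exI[of _ "{C, C'}"] conjI)
  have "set C \<union> set C' \<subseteq> verts m" using assms(1,2) by (auto simp: dicycle_def)
  moreover have "card (set C \<union> set C') = card (verts m)"
    using assms by (simp add: card_Un_disjoint distinct_card dicycle_def verts_def card_cartesian_product)
  ultimately show "(\<Union>D\<in>{C, C'}. set D) = verts m"
    by (simp add: card_subset_eq verts_def)
qed (use assms in auto)

text \<open>G_2m is 5-regular on 2m vertices, so five arc-disjoint C_m-factors exhaust its 10m arcs.\<close>

lemma Cm_factorization_of_cycles:
  fixes C :: "nat \<Rightarrow> nat \<Rightarrow> vtx list"
  assumes m: "4 \<le> m"
    and cycles: "\<And>i b. i < 5 \<Longrightarrow> b < 2 \<Longrightarrow> dicycle m (C i b)"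
    and factors: "\<And>i. i < 5 \<Longrightarrow> set (C i 0) \<inter> set (C i 1) = {}"
    and disjoint: "\<And>i b i' b'. i < 5 \<Longrightarrow> b < 2 \<Longrightarrow> i' < 5 \<Longrightarrow> b' < 2 \<Longrightarrow> (i, b) \<noteq> (i', b') \<Longrightarrow>
      cyc_arcs (C i b) \<inter> cyc_arcs (C i' b') = {}"
  shows "Cm_factorization m"
proof -
  define A where "A i = cyc_arcs (C i 0) \<union> cyc_arcs (C i 1)" for i
  have arcs: "cyc_arcs (C i b) \<subseteq> G_arcs m" "finite (cyc_arcs (C i b))" if "i < 5" "b < 2" for i b
    using cyc_arcs_subset_G_arcs[OF cycles[OF that]] finite_G_arcs by (auto intro: finite_subset)
  have finite: "finite (A i)" if "i < 5" for i
    using arcs that unfolding A_def by simp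
  have disjoint_A: "A i \<inter> A i' = {}" if "i < 5" "i' < 5" "i \<noteq> i'" for i i'
    using that disjoint[of i 0 i' 0] disjoint[of i 0 i' 1] disjoint[of i 1 i' 0] disjoint[of i 1 i' 1]
    unfolding A_def by auto
  have "card (A i) = 2 * m" if "i < 5" for i
    using that disjoint[of i 0 i 1] arcs card_cyc_arcs[OF cycles]
    unfolding A_def by (subst card_Un_disjoint) auto
  then have "card (\<Union>i<5. A i) = 10 * m"
    using finite disjoint_A by (simp add: card_UN_disjoint)
  moreover have "(\<Union>i<5. A i) \<subseteq> G_arcs m"
    using arcs(1)[of _ 0] arcs(1)[of _ 1] unfolding A_def by fastforce
  ultimately have "(\<Union>i<5. A i) = G_arcs m"
    using card_G_arcs[OF m] finite_G_arcs by (intro card_subset_eq) auto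
  moreover have "Cm_factor m (A i)" if "i < 5" for i
    unfolding A_def using cycles factors that by (intro Cm_factor_of_two_cycles) auto
  ultimately show ?thesis
    unfolding Cm_factorization_def
  proof (intro exI[of _ "A ` {..<5}"] conjI ballI impI)
    fix F F' assume "F \<in> A ` {..<5}" "F' \<in> A ` {..<5}" "F \<noteq> F'"
    then obtain i i' where "i < 5" "i' < 5" "i \<noteq> i'" "F = A i" "F' = A i'" by auto
    then show "F \<inter> F' = {}" using disjoint_A by simp
  qed auto
qed

section \<open>Assembling the factorization\<close>

lemma concat_conv_index_pairs:
  "concat xss = map (\<lambda>(i, j). xss ! i ! j)
     (concat (map (\<lambda>i. map (Pair i) [0..<length (xss ! i)]) [0..<length xss]))"
proof -
  have "map (\<lambda>(i, j). xss ! i ! j)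
        (concat (map (\<lambda>i. map (Pair i) [0..<length (xss ! i)]) [0..<length xss]))
      = concat (map (\<lambda>i. map (\<lambda>j. xss ! i ! j) [0..<length (xss ! i)]) [0..<length xss])"
    by (simp add: map_concat comp_def)
  also have "\<dots> = concat (map (\<lambda>i. xss ! i) [0..<length xss])" by (simp add: map_nth)
  also have "\<dots> = concat xss" by (simp add: map_nth)
  finally show ?thesis by simp
qed

lemma pairwise_concat_nth:
  assumes "\<forall>a<length (concat xss). \<forall>b<length (concat xss). a \<noteq> b \<longrightarrow> R (concat xss ! a) (concat xss ! b)"
    and "i < length xss" "j < length (xss ! i)" "i' < length xss" "j' < length (xss ! i')"
    and "(i, j) \<noteq> (i', j')"
  shows "R (xss ! i ! j) (xss ! i' ! j')"
proof -
  define ix where "ix = concat (map (\<lambda>i. map (Pair i) [0..<length (xss ! i)]) [0..<length xss])"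
  have concat: "concat xss = map (\<lambda>(i, j). xss ! i ! j) ix"
    unfolding ix_def by (rule concat_conv_index_pairs)
  have "(i, j) \<in> set ix" "(i', j') \<in> set ix" using assms(2-5) by (force simp: ix_def)+
  then obtain a b where "a < length ix" "ix ! a = (i, j)" "b < length ix" "ix ! b = (i', j')"
    by (metis in_set_conv_nth)
  moreover have "length (concat xss) = length ix" using concat by simp
  ultimately show ?thesis using assms(1,6) unfolding concat by force
qed

lemma cycle_pairD:
  assumes "cycle_pair m p k B \<beta> rs"
  shows "b < 2 \<Longrightarrow> dicycle m (segment_cycle m k B \<beta> (rs b))"
    and "b < 2 \<Longrightarrow> cyc_arcs (segment_cycle m k B \<beta> (rs b)) =
      (\<Union>S\<in>set (segments m k B \<beta> (rs b)). walk_arcs S)"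
    and "b < 2 \<Longrightarrow> r \<in> set (rs b) \<Longrightarrow> r < length B \<and> placed m p k (\<beta> r) (B ! r)"
    and "set (segment_cycle m k B \<beta> (rs 0)) \<inter> set (segment_cycle m k B \<beta> (rs 1)) = {}"
    and "set (rs 0) \<inter> set (rs 1) = {}"
  using assms unfolding cycle_pair_def by auto

lemma Cm_factorization_of_cycle_pairs:
  assumes m: "m = p + 12 * k" "4 \<le> m" and "length Bs = 5"
    and pairs: "\<And>i. i < 5 \<Longrightarrow> cycle_pair m p k (Bs ! i) (\<beta> i) (rs i)"
    and arcs: "\<forall>a<length (concat Bs). \<forall>b<length (concat Bs). a \<noteq> b \<longrightarrow>
      walk_arcs (concat Bs ! a) \<inter> walk_arcs (concat Bs ! b) = {}"
  shows "Cm_factorization m"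
proof (rule Cm_factorization_of_cycles[OF m(2)])
  let ?C = "\<lambda>i b. segment_cycle m k (Bs ! i) (\<beta> i) (rs i b)"
  show "dicycle m (?C i b)" if "i < 5" "b < 2" for i b
    using cycle_pairD(1)[OF pairs that(2)] that(1) .
  show "set (?C i 0) \<inter> set (?C i 1) = {}" if "i < 5" for i
    using cycle_pairD(4)[OF pairs[OF that]] .
  show "cyc_arcs (?C i b) \<inter> cyc_arcs (?C i' b') = {}"
    if ib: "i < 5" "b < 2" "i' < 5" "b' < 2" "(i, b) \<noteq> (i', b')" for i b i' b'
    unfolding cycle_pairD(2)[OF pairs[OF ib(1)] ib(2)] cycle_pairD(2)[OF pairs[OF ib(3)] ib(4)]
  proof (rule segments_arcs_disjoint)
    show "p + 12 * k \<le> m" using m(1) by simp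
    show "\<forall>r\<in>set (rs i b). placed m p k (\<beta> i r) (Bs ! i ! r)"
      "\<forall>r'\<in>set (rs i' b'). placed m p k (\<beta> i' r') (Bs ! i' ! r')"
      using cycle_pairD(3)[OF pairs[OF ib(1)] ib(2)] cycle_pairD(3)[OF pairs[OF ib(3)] ib(4)] by simp_all
    fix r r' assume r: "r \<in> set (rs i b)" "r' \<in> set (rs i' b')"
    have "(i, r) \<noteq> (i', r')"
    proof
      assume "(i, r) = (i', r')"
      then have "b = 0 \<and> b' = 1 \<or> b = 1 \<and> b' = 0" "r \<in> set (rs i b) \<inter> set (rs i b')"
        using ib r by auto
      then show False using cycle_pairD(5)[OF pairs[OF ib(1)]] by auto
    qed
    moreover have "r < length (Bs ! i)" "r' < length (Bs ! i')"
      using cycle_pairD(3)[OF pairs[OF ib(1)] ib(2) r(1)] cycle_pairD(3)[OF pairs[OF ib(3)] ib(4) r(2)]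
      by simp_all
    ultimately show "walk_arcs (Bs ! i ! r) \<inter> walk_arcs (Bs ! i' ! r') = {}"
      using pairwise_concat_nth[OF arcs] ib(1,3) assms(3) by simp
  qed
qed

text \<open>The i-th basic set is the i-th type-2 set for i < 3 and the (i - 3)-th type-1 set otherwise.\<close>

definition basic_role :: "nat \<Rightarrow> nat \<Rightarrow> bool" where
  "basic_role i r \<longleftrightarrow> (if i < 3 then 4 \<le> r else 2 \<le> r)"

definition basic_positions :: "nat \<Rightarrow> nat \<Rightarrow> nat list" where
  "basic_positions i b = (if i < 3 then [2 * b, 2 * b + 4, 2 * b + 1, 2 * b + 5] else [b, b + 2])"

lemma basic_sets_cycle_pair:
  assumes "m = p + 12 * k" "0 < p"
    and "\<forall>i<3. type2_basic m p k (T2 i)" "\<forall>i<2. type1_basic m p k (T1 i)" "i < 5"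
  shows "cycle_pair m p k ((map T2 [0..<3] @ map T1 [0..<2]) ! i) (basic_role i) (basic_positions i)"
proof (cases "i < 3")
  case True
  then have "basic_role i = (\<lambda>r. 4 \<le> r)"
    "basic_positions i = (\<lambda>b. [2 * b, 2 * b + 4, 2 * b + 1, 2 * b + 5])"
    by (auto simp: basic_role_def basic_positions_def)
  then show ?thesis using type2_cycle_pair[OF _ assms(1,2)] assms(3) True by (simp add: nth_append)
next
  case False
  then have "basic_role i = (\<lambda>r. 2 \<le> r)" "basic_positions i = (\<lambda>b. [b, b + 2])"
    by (auto simp: basic_role_def basic_positions_def)
  moreover have "i - 3 < 2" using assms(5) by simp
  ultimately show ?thesis using type1_cycle_pair[OF _ assms(1,2)] assms(4) False by (simp add: nth_append)
qed

theorem mainTheorem7: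
  fixes p k m :: nat
  assumes "p \<in> {11, 13, 17, 19}"
    and "m = p + 12 * k"
    and "\<exists>T2 T1 :: nat \<Rightarrow> vtx list list.
           (\<forall>i<3. type2_basic m p k (T2 i)) \<and> (\<forall>i<2. type1_basic m p k (T1 i)) \<and>
           (let L = concat (map T2 [0..<3]) @ concat (map T1 [0..<2]) in
              \<forall>i<length L. \<forall>j<length L. i \<noteq> j \<longrightarrow> walk_arcs (L ! i) \<inter> walk_arcs (L ! j) = {})"
  shows "Cm_factorization m"
proof -
  obtain T2 T1 :: "nat \<Rightarrow> vtx list list" where
    type2: "\<forall>i<3. type2_basic m p k (T2 i)" and type1: "\<forall>i<2. type1_basic m p k (T1 i)" and
    arcs: "let L = concat (map T2 [0..<3]) @ concat (map T1 [0..<2]) in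
      \<forall>i<length L. \<forall>j<length L. i \<noteq> j \<longrightarrow> walk_arcs (L ! i) \<inter> walk_arcs (L ! j) = {}"
    using assms(3) by blast
  define Bs where "Bs = map T2 [0..<3] @ map T1 [0..<2]"
  have p: "0 < p" "4 \<le> m" using assms(1,2) by auto
  have "concat Bs = concat (map T2 [0..<3]) @ concat (map T1 [0..<2])" by (simp add: Bs_def)
  then have "\<forall>a<length (concat Bs). \<forall>b<length (concat Bs). a \<noteq> b \<longrightarrow>
      walk_arcs (concat Bs ! a) \<inter> walk_arcs (concat Bs ! b) = {}"
    using arcs by (simp add: Let_def)
  moreover have "length Bs = 5" by (simp add: Bs_def)
  ultimately show ?thesis
    using Cm_factorization_of_cycle_pairs[OF assms(2) p(2)]
      basic_sets_cycle_pair[OF assms(2) p(1) type2 type1] unfolding Bs_def by blast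
qed

end
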